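(* Let $n\geq 2$ and let $\mathcal{G}=(\mathcal{V},\mathcal{E})$ be a directed graph on $\mathcal{V}=\{1,\ldots,n\}$ in which every node has at least one outgoing edge, with hyperlink matrix $A$, let $m\in(0,1)$, let $x^*$ be the PageRank vector, and let $Q=(1-m)A$. Let $\mathcal{V}_1,\ldots,\mathcal{V}_N$ ($1\leq N\leq n$) be a partition of $\mathcal{V}$ into nonempty groups of consecutive indices, $\mathcal{V}_1=\{1,\ldots,l_1\}$, $\mathcal{V}_2=\{l_1+1,\ldots,l_1+l_2\}$, $\ldots$, $\mathcal{V}_N=\{n-l_N+1,\ldots,n\}$, and partition $Q$ into blocks $\check{Q}_{hg}\in\mathbb{R}^{l_h\times l_g}$ accordingly; likewise write $x(k)=(\check{x}_1(k)^T,\ldots,\check{x}_N(k)^T)^T$ and $z(k)=(\check{z}_1(k)^T,\ldots,\check{z}_N(k)^T)^T$ with $\check{x}_h(k),\check{z}_h(k)\in\mathbb{R}^{l_h}$. Let $\{\psi(k)\}_{k\geq 0}$ be any sequence in $\{1,\ldots,N\}$. Consider the algorithm with $\check{x}_h(0)=\check{z}_h(0)=\frac{m}{n}\mathbf{1}_{l_h}$ for all $h$, and for $k\geq 0$ and each $h$, $$\check{x}_h(k+1)=\check{x}_h(k)+\check{Q}_{h\psi(k)}\big(I-\check{Q}_{\psi(k)\psi(k)}\big)^{-1}\check{z}_{\psi(k)}(k),$$ $$\check{z}_h(k+1)=\begin{cases}0&\text{if } h=\psi(k),\\ \check{z}_h(k)+\check{Q}_{h\psi(k)}\big(I-\check{Q}_{\psi(k)\psi(k)}\big)^{-1}\check{z}_{\psi(k)}(k)&\text{otherwise.}\end{cases}$$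 Then $x(k)\leq x(k+1)\leq x^*$ for all $k\geq 0$.
   Context: Write $(i,j)\in\mathcal{E}$ if page $i$ has a link to page $j$. $\mathcal{L}_j^{\text{out}}=\{i:(j,i)\in\mathcal{E}\}$ and $n_j=|\mathcal{L}_j^{\text{out}}|\geq 1$. The hyperlink matrix $A=(a_{ij})$ is defined by $a_{ij}=1/n_j$ if $i\in\mathcal{L}_j^{\text{out}}$ and $a_{ij}=0$ otherwise (column stochastic). The PageRank vector $x^*$ satisfies $x^*=(1-m)Ax^*+\frac{m}{n}\mathbf{1}_n$ and $\mathbf{1}_n^Tx^*=1$. Each diagonal block $\check{Q}_{hh}$ is a nonnegative principal submatrix of the Schur stable matrix $Q$, so $I-\check{Q}_{hh}$ is invertible. Inequalities between vectors are entrywise. *)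

theory Defs
  imports "Jordan_Normal_Form.Gauss_Jordan_Elimination"
begin

text \<open>Nodes are 0-indexed: V = {0..<n}. E is a set of directed edges (i,j) meaning page i links to page j.\<close>

definition out_links :: "(nat \<times> nat) set \<Rightarrow> nat \<Rightarrow> nat set" where
  "out_links E j = {i. (j, i) \<in> E}"

definition hyperlink_matrix :: "nat \<Rightarrow> (nat \<times> nat) set \<Rightarrow> real mat" where
  "hyperlink_matrix n E = mat n n (\<lambda>(i, j).
      if i \<in> out_links E j then 1 / real (card (out_links E j)) else 0)"

definition is_pagerank :: "nat \<Rightarrow> real mat \<Rightarrow> real \<Rightarrow> real vec \<Rightarrow> bool" where
  "is_pagerank n A m x \<longleftrightarrow> x \<in> carrier_vec n \<and>
     x = (1 - m) \<cdot>\<^sub>m A *\<^sub>v x + (m / real n) \<cdot>\<^sub>v (vec n (\<lambda>_. 1)) \<and>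
     (\<Sum>i<n. x $ i) = 1"

text \<open>Block partition into consecutive groups of sizes l 0, ..., l (N-1);
  block h starts at offset blk_off l h.\<close>

definition blk_off :: "(nat \<Rightarrow> nat) \<Rightarrow> nat \<Rightarrow> nat" where
  "blk_off l h = (\<Sum>g<h. l g)"

definition blk_vec :: "(nat \<Rightarrow> nat) \<Rightarrow> real vec \<Rightarrow> nat \<Rightarrow> real vec" where
  "blk_vec l v h = vec (l h) (\<lambda>i. v $ (blk_off l h + i))"

definition blk_mat :: "(nat \<Rightarrow> nat) \<Rightarrow> real mat \<Rightarrow> nat \<Rightarrow> nat \<Rightarrow> real mat" where
  "blk_mat l Q h g = mat (l h) (l g) (\<lambda>(i, j). Q $$ (blk_off l h + i, blk_off l g + j))"

definition blk_update :: "(nat \<Rightarrow> nat) \<Rightarrow> real mat \<Rightarrow> nat \<Rightarrow> nat \<Rightarrow> real vec \<Rightarrow> real vec" where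
  "blk_update l Q h p z = blk_mat l Q h p *\<^sub>v
     (the (mat_inverse (1\<^sub>m (l p) - blk_mat l Q p p)) *\<^sub>v blk_vec l z p)"

end

theory Submission
  imports Defs "Jordan_Normal_Form.Determinant"
begin

text \<open>Write Q = (1 - m) A. It is nonnegative with all column sums equal to 1 - m < 1, and for such a
  matrix u = w + Q u with w \<ge> 0 forces u \<ge> 0: the negative part v of u satisfies v \<le> Q v, and
  summing gives \<open>\<Sum>v \<le> (1 - m) \<Sum>v\<close>. The same applies to every diagonal block, so each
  I - Q_pp is invertible and y = (I - Q_pp)^-1 z_p, the solution of y = z_p + Q_pp y, is nonnegative
  when z is. If y' denotes y placed in block p, a step of the algorithm adds Q y' to x and
  Q y' - y' to z (on block p this is 0 by the equation for y). Hence z stays nonnegative and x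
  increases. Moreover the step subtracts y' from u = x* - x + z and Q y' from x* - x, so the
  invariant x* - x = Q u propagates from k = 0, where it is the PageRank equation. Then u = z + Q u,
  so u \<ge> 0 and x* - x = Q u \<ge> 0.\<close>

definition col_substochastic :: "'a set \<Rightarrow> ('a \<Rightarrow> 'a \<Rightarrow> real) \<Rightarrow> real \<Rightarrow> bool" where
  "col_substochastic I M c \<longleftrightarrow> (\<forall>i\<in>I. \<forall>j\<in>I. 0 \<le> M i j) \<and> (\<forall>j\<in>I. (\<Sum>i\<in>I. M i j) \<le> c)"

lemma col_substochastic_fixed_point_nonneg:
  fixes M :: "'a \<Rightarrow> 'a \<Rightarrow> real"
  assumes "finite I" and M: "col_substochastic I M c" and "c < 1"
    and w: "\<forall>i\<in>I. 0 \<le> w i" and u: "\<forall>i\<in>I. u i = w i + (\<Sum>j\<in>I. M i j * u j)"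
  shows "\<forall>i\<in>I. 0 \<le> u i"
proof -
  have M_nonneg: "\<forall>i\<in>I. \<forall>j\<in>I. 0 \<le> M i j" and col_sum: "\<forall>j\<in>I. (\<Sum>i\<in>I. M i j) \<le> c"
    using M by (auto simp: col_substochastic_def)
  define v where "v j = max 0 (- u j)" for j
  have v_nonneg: "0 \<le> v j" for j
    by (simp add: v_def)
  have v_sub: "v i \<le> (\<Sum>j\<in>I. M i j * v j)" if "i \<in> I" for i
  proof (cases "0 \<le> u i")
    case True
    then show ?thesis
      using M_nonneg that v_nonneg by (simp add: v_def sum_nonneg)
  next
    case False
    have "u i = w i + (\<Sum>j\<in>I. M i j * u j)"
      using u that by blast
    with False have "v i = - w i + (\<Sum>j\<in>I. M i j * (- u j))"
      by (simp add: v_def sum_negf)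
    also have "\<dots> \<le> (\<Sum>j\<in>I. M i j * (- u j))"
      using w that by simp
    also have "\<dots> \<le> (\<Sum>j\<in>I. M i j * v j)"
      using M_nonneg that by (intro sum_mono mult_left_mono) (auto simp: v_def)
    finally show ?thesis .
  qed
  have "(\<Sum>i\<in>I. v i) \<le> (\<Sum>i\<in>I. \<Sum>j\<in>I. M i j * v j)"
    using v_sub by (rule sum_mono)
  also have "\<dots> = (\<Sum>j\<in>I. (\<Sum>i\<in>I. M i j) * v j)"
    by (subst sum.swap) (simp add: sum_distrib_right)
  also have "\<dots> \<le> (\<Sum>j\<in>I. c * v j)"
    using col_sum v_nonneg by (intro sum_mono mult_right_mono) auto
  also have "\<dots> = c * (\<Sum>j\<in>I. v j)"
    by (simp add: sum_distrib_left)
  finally have "(\<Sum>i\<in>I. v i) \<le> c * (\<Sum>i\<in>I. v i)" .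
  moreover have "0 \<le> (\<Sum>i\<in>I. v i)"
    using v_nonneg by (simp add: sum_nonneg)
  ultimately have "(\<Sum>i\<in>I. v i) = 0"
    using \<open>c < 1\<close> by (auto simp: mult_le_cancel_right1)
  then have "\<forall>i\<in>I. v i = 0"
    using \<open>finite I\<close> v_nonneg by (simp add: sum_nonneg_eq_0_iff)
  then show ?thesis
    by (auto simp: v_def max_def split: if_splits)
qed

lemma iteration_gap_invariant:
  fixes q :: "'a \<Rightarrow> 'a \<Rightarrow> real" and xs :: "'a \<Rightarrow> real" and x z Y :: "nat \<Rightarrow> 'a \<Rightarrow> real"
  assumes init: "\<forall>i\<in>I. xs i - x 0 i = (\<Sum>j\<in>I. q i j * (xs j - x 0 j + z 0 j))"
    and x_step: "\<forall>k. \<forall>i\<in>I. x (Suc k) i = x k i + (\<Sum>j\<in>I. q i j * Y k j)"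
    and z_step: "\<forall>k. \<forall>i\<in>I. z (Suc k) i = z k i + (\<Sum>j\<in>I. q i j * Y k j) - Y k i"
  shows "\<forall>i\<in>I. xs i - x k i = (\<Sum>j\<in>I. q i j * (xs j - x k j + z k j))"
proof (induction k)
  case 0
  then show ?case
    using init .
next
  case (Suc k)
  show ?case
  proof
    fix i assume i: "i \<in> I"
    have "xs i - x (Suc k) i = (xs i - x k i) - (\<Sum>j\<in>I. q i j * Y k j)"
      using i x_step by simp
    also have "\<dots> = (\<Sum>j\<in>I. q i j * (xs j - x k j + z k j)) - (\<Sum>j\<in>I. q i j * Y k j)"
      by (simp only: Suc.IH[rule_format, OF i])
    also have "\<dots> = (\<Sum>j\<in>I. q i j * (xs j - x k j + z k j - Y k j))"
      by (simp add: right_diff_distrib flip: sum_subtractf)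
    also have "\<dots> = (\<Sum>j\<in>I. q i j * (xs j - x (Suc k) j + z (Suc k) j))"
      by (intro sum.cong refl) (simp add: x_step z_step algebra_simps)
    finally show "xs i - x (Suc k) i = (\<Sum>j\<in>I. q i j * (xs j - x (Suc k) j + z (Suc k) j))" .
  qed
qed

lemma le_of_gap_invariant:
  fixes q :: "'a \<Rightarrow> 'a \<Rightarrow> real"
  assumes "finite I" and q: "col_substochastic I q c" and "c < 1"
    and z: "\<forall>i\<in>I. 0 \<le> z i"
    and gap: "\<forall>i\<in>I. xs i - x i = (\<Sum>j\<in>I. q i j * (xs j - x j + z j))"
    and i: "i \<in> I"
  shows "x i \<le> xs i"
proof -
  have "\<forall>j\<in>I. 0 \<le> xs j - x j + z j"
  proof (rule col_substochastic_fixed_point_nonneg[OF \<open>finite I\<close> q \<open>c < 1\<close> z], intro ballI)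
    fix j assume "j \<in> I"
    then have "xs j - x j = (\<Sum>j'\<in>I. q j j' * (xs j' - x j' + z j'))"
      using gap by blast
    then show "xs j - x j + z j = z j + (\<Sum>j'\<in>I. q j j' * (xs j' - x j' + z j'))"
      by linarith
  qed
  then have "0 \<le> (\<Sum>j\<in>I. q i j * (xs j - x j + z j))"
    using q i by (auto simp: col_substochastic_def intro!: sum_nonneg)
  then show ?thesis
    using gap[rule_format, OF i] by linarith
qed

lemma one_minus_mat_mult_vec_nth:
  fixes A :: "'a :: comm_ring_1 mat"
  assumes "A \<in> carrier_mat K K" "v \<in> carrier_vec K" "r < K"
  shows "((1\<^sub>m K - A) *\<^sub>v v) $ r = v $ r - (\<Sum>s<K. A $$ (r, s) * v $ s)"
proof -
  have "((1\<^sub>m K - A) *\<^sub>v v) $ r = (\<Sum>s<K. ((if r = s then 1 else 0) - A $$ (r, s)) * v $ s)"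
    using assms by (simp add: scalar_prod_def lessThan_atLeast0)
  also have "\<dots> = (\<Sum>s<K. if r = s then v $ s else 0) - (\<Sum>s<K. A $$ (r, s) * v $ s)"
    by (subst sum_subtractf[symmetric]) (rule sum.cong, auto simp: algebra_simps)
  also have "\<dots> = v $ r - (\<Sum>s<K. A $$ (r, s) * v $ s)"
    using assms by simp
  finally show ?thesis .
qed

lemma mat_inverse_one_minus_exists:
  fixes A :: "real mat"
  assumes A: "A \<in> carrier_mat K K" and sub: "col_substochastic {..<K} (\<lambda>i j. A $$ (i, j)) c"
    and "c < 1"
  shows "\<exists>B. mat_inverse (1\<^sub>m K - A) = Some B"
proof (rule ccontr)
  have IA: "1\<^sub>m K - A \<in> carrier_mat K K"
    using A by (simp add: minus_carrier_mat)
  assume "\<nexists>B. mat_inverse (1\<^sub>m K - A) = Some B"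
  then have "mat_inverse (1\<^sub>m K - A) = None"
    by auto
  then have "det (1\<^sub>m K - A) = 0"
    using mat_inverse(1)[OF IA, where b = "()"] det_non_zero_imp_unit[OF IA, where b = "()"] by blast
  then obtain v where v: "v \<in> carrier_vec K" "v \<noteq> 0\<^sub>v K" "(1\<^sub>m K - A) *\<^sub>v v = 0\<^sub>v K"
    using det_0_iff_vec_prod_zero[OF IA] by auto
  \<comment> \<open>A kernel vector of I - A is a fixed point of A, so both it and its negative are nonnegative.\<close>
  have nonneg: "\<forall>r\<in>{..<K}. 0 \<le> u r"
    if "\<forall>r\<in>{..<K}. u r = 0 + (\<Sum>s\<in>{..<K}. A $$ (r, s) * u s)" for u
    by (rule col_substochastic_fixed_point_nonneg[OF _ sub \<open>c < 1\<close> _ that]) auto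
  have fixed: "v $ r = 0 + (\<Sum>s\<in>{..<K}. A $$ (r, s) * v $ s)" if r: "r \<in> {..<K}" for r
  proof -
    have "((1\<^sub>m K - A) *\<^sub>v v) $ r = 0"
      using v(3) r by simp
    then show ?thesis
      using one_minus_mat_mult_vec_nth[OF A v(1), of r] r by simp
  qed
  have "\<forall>r\<in>{..<K}. 0 \<le> v $ r"
    using fixed by (intro nonneg) blast
  moreover have "\<forall>r\<in>{..<K}. 0 \<le> - v $ r"
  proof (intro nonneg ballI)
    fix r assume "r \<in> {..<K}"
    from fixed[OF this] show "- v $ r = 0 + (\<Sum>s\<in>{..<K}. A $$ (r, s) * - v $ s)"
      by (simp add: sum_negf)
  qed
  ultimately have "v = 0\<^sub>v K"
    using v(1) by (intro eq_vecI) (auto intro: antisym)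
  with v(2) show False ..
qed

lemma mat_inverse_one_minus_fixed_point:
  fixes A :: "'a :: field mat"
  assumes A: "A \<in> carrier_mat K K" and inv: "mat_inverse (1\<^sub>m K - A) = Some B"
    and w: "w \<in> carrier_vec K" and s: "s < K"
  shows "(B *\<^sub>v w) $ s = w $ s + (\<Sum>t<K. A $$ (s, t) * (B *\<^sub>v w) $ t)"
proof -
  have IA: "1\<^sub>m K - A \<in> carrier_mat K K"
    using A by (simp add: minus_carrier_mat)
  have B: "B \<in> carrier_mat K K" and "(1\<^sub>m K - A) * B = 1\<^sub>m K"
    using mat_inverse(2)[OF IA inv] by auto
  then have "(1\<^sub>m K - A) *\<^sub>v (B *\<^sub>v w) = w"
    using assoc_mult_mat_vec[OF IA B w] w by simp
  then show ?thesis
    using one_minus_mat_mult_vec_nth[OF A mult_mat_vec_carrier[OF B w] s] by (simp add: algebra_simps)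
qed

lemma blk_off_Suc: "blk_off l (Suc h) = blk_off l h + l h"
  by (simp add: blk_off_def)

lemma blk_off_mono: "h \<le> h' \<Longrightarrow> blk_off l h \<le> blk_off l h'"
  unfolding blk_off_def by (rule sum_mono2) auto

lemma blk_end_le: "h < h' \<Longrightarrow> blk_off l h + l h \<le> blk_off l h'"
  using blk_off_mono[of "Suc h" h' l] by (simp add: blk_off_Suc)

lemma blk_index_exists: "i < blk_off l N \<Longrightarrow> \<exists>h<N. \<exists>r<l h. i = blk_off l h + r"
proof (induction N)
  case 0
  then show ?case
    by (simp add: blk_off_def)
next
  case (Suc N)
  show ?case
  proof (cases "i < blk_off l N")
    case True
    then show ?thesis
      using Suc.IH less_SucI by blast
  next
    case False
    then have "i - blk_off l N < l N" "i = blk_off l N + (i - blk_off l N)"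
      using Suc.prems by (simp_all add: blk_off_Suc)
    then show ?thesis
      using lessI by blast
  qed
qed

lemma blk_index_unique:
  assumes "r < l h" "r' < l h'" "blk_off l h + r = blk_off l h' + r'"
  shows "h = h'"
  using assms blk_end_le[of h h' l] blk_end_le[of h' h l] by (cases h h' rule: linorder_cases) auto

lemma blk_vec_nth: "r < l h \<Longrightarrow> blk_vec l v h $ r = v $ (blk_off l h + r)"
  by (simp add: blk_vec_def)

lemma dim_blk_update [simp]: "dim_vec (blk_update l Q h p z) = l h"
  by (simp add: blk_update_def blk_mat_def)

lemma blk_mat_nth:
  "r < l h \<Longrightarrow> s < l g \<Longrightarrow> blk_mat l Q h g $$ (r, s) = Q $$ (blk_off l h + r, blk_off l g + s)"
  by (simp add: blk_mat_def)

definition blk_solve :: "(nat \<Rightarrow> nat) \<Rightarrow> real mat \<Rightarrow> nat \<Rightarrow> real vec \<Rightarrow> real vec" where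
  "blk_solve l Q p z = the (mat_inverse (1\<^sub>m (l p) - blk_mat l Q p p)) *\<^sub>v blk_vec l z p"

lemma blk_update_eq: "blk_update l Q h p z = blk_mat l Q h p *\<^sub>v blk_solve l Q p z"
  by (simp add: blk_update_def blk_solve_def)

definition blk_embed :: "(nat \<Rightarrow> nat) \<Rightarrow> nat \<Rightarrow> real vec \<Rightarrow> nat \<Rightarrow> real" where
  "blk_embed l p v j =
     (if blk_off l p \<le> j \<and> j < blk_off l p + l p then v $ (j - blk_off l p) else 0)"

lemma blk_embed_nth: "r < l h \<Longrightarrow> blk_embed l p v (blk_off l h + r) = (if h = p then v $ r else 0)"
  using blk_index_unique[of r l h "blk_off l h + r - blk_off l p" p]
  by (auto simp: blk_embed_def)

lemma sum_lessThan_shift: "(\<Sum>t<K. f (a + t)) = (\<Sum>i\<in>{a..<a + K}. f i)" for a K :: nat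
  by (induction K) (simp_all add: add.commute)

lemma sum_mult_blk_embed:
  assumes "blk_off l p + l p \<le> n"
  shows "(\<Sum>j<n. f j * blk_embed l p v j) = (\<Sum>t<l p. f (blk_off l p + t) * v $ t)"
proof -
  have "(\<Sum>j<n. f j * blk_embed l p v j)
      = (\<Sum>j\<in>{blk_off l p..<blk_off l p + l p}. f j * blk_embed l p v j)"
    using assms by (intro sum.mono_neutral_right) (auto simp: blk_embed_def)
  also have "\<dots> = (\<Sum>t<l p. f (blk_off l p + t) * blk_embed l p v (blk_off l p + t))"
    by (rule sum_lessThan_shift[symmetric])
  also have "\<dots> = (\<Sum>t<l p. f (blk_off l p + t) * v $ t)"
    by (simp add: blk_embed_def)
  finally show ?thesis .
qed

lemma sum_shifted_le:
  fixes f :: "nat \<Rightarrow> real"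
  assumes "a + K \<le> n" and "\<forall>i<n. 0 \<le> f i"
  shows "(\<Sum>t<K. f (a + t)) \<le> (\<Sum>i<n. f i)"
proof -
  have "(\<Sum>t<K. f (a + t)) = (\<Sum>i\<in>{a..<a + K}. f i)"
    by (rule sum_lessThan_shift)
  also have "\<dots> \<le> (\<Sum>i<n. f i)"
    using assms by (intro sum_mono2) auto
  finally show ?thesis .
qed

lemma col_substochastic_blk_mat_diag:
  assumes Q: "col_substochastic {..<n} (\<lambda>i j. Q $$ (i, j)) c" and p: "blk_off l p + l p \<le> n"
  shows "col_substochastic {..<l p} (\<lambda>r s. blk_mat l Q p p $$ (r, s)) c"
  unfolding col_substochastic_def
proof (intro conjI ballI)
  fix r s assume "r \<in> {..<l p}" "s \<in> {..<l p}"
  then show "0 \<le> blk_mat l Q p p $$ (r, s)"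
    using Q p by (auto simp: col_substochastic_def blk_mat_nth)
next
  fix s assume s: "s \<in> {..<l p}"
  have "(\<Sum>r<l p. blk_mat l Q p p $$ (r, s)) = (\<Sum>r<l p. Q $$ (blk_off l p + r, blk_off l p + s))"
    using s by (simp add: blk_mat_nth)
  also have "\<dots> \<le> (\<Sum>i<n. Q $$ (i, blk_off l p + s))"
    using Q p s by (intro sum_shifted_le) (auto simp: col_substochastic_def)
  also have "\<dots> \<le> c"
    using Q p s by (auto simp: col_substochastic_def)
  finally show "(\<Sum>r\<in>{..<l p}. blk_mat l Q p p $$ (r, s)) \<le> c" .
qed

context
  fixes n N :: nat and l :: "nat \<Rightarrow> nat" and Q :: "real mat" and c :: real and p :: nat
  assumes Q: "col_substochastic {..<n} (\<lambda>i j. Q $$ (i, j)) c" and "c < 1"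
    and partition: "blk_off l N = n" and p: "p < N"
begin

lemma blk_end_le_dim: "blk_off l p + l p \<le> n"
  using blk_end_le[OF p, of l] partition by simp

lemma blk_mat_inverse_exists:
  obtains B where "mat_inverse (1\<^sub>m (l p) - blk_mat l Q p p) = Some B" "B \<in> carrier_mat (l p) (l p)"
proof -
  have IA: "1\<^sub>m (l p) - blk_mat l Q p p \<in> carrier_mat (l p) (l p)"
    by (simp add: blk_mat_def minus_carrier_mat)
  obtain B where "mat_inverse (1\<^sub>m (l p) - blk_mat l Q p p) = Some B"
    using mat_inverse_one_minus_exists[OF _ col_substochastic_blk_mat_diag[OF Q blk_end_le_dim] \<open>c < 1\<close>]
    by (auto simp: blk_mat_def)
  with mat_inverse(2)[OF IA this] that show ?thesis
    by blast
qed

lemma dim_blk_solve [simp]: "dim_vec (blk_solve l Q p z) = l p"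
proof -
  obtain B where "mat_inverse (1\<^sub>m (l p) - blk_mat l Q p p) = Some B" "B \<in> carrier_mat (l p) (l p)"
    using blk_mat_inverse_exists .
  then show ?thesis
    by (simp add: blk_solve_def)
qed

lemma blk_solve_fixed_point:
  assumes "s < l p"
  shows "blk_solve l Q p z $ s
    = blk_vec l z p $ s + (\<Sum>t<l p. blk_mat l Q p p $$ (s, t) * blk_solve l Q p z $ t)"
proof -
  obtain B where B: "mat_inverse (1\<^sub>m (l p) - blk_mat l Q p p) = Some B"
    using blk_mat_inverse_exists by blast
  show ?thesis
    unfolding blk_solve_def B option.sel
    by (rule mat_inverse_one_minus_fixed_point[OF _ B _ assms]) (auto simp: blk_mat_def blk_vec_def)
qed

lemma blk_solve_nonneg:
  assumes "\<forall>i<n. 0 \<le> z $ i"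
  shows "\<forall>s\<in>{..<l p}. 0 \<le> blk_solve l Q p z $ s"
proof (rule col_substochastic_fixed_point_nonneg[OF _ col_substochastic_blk_mat_diag[OF Q blk_end_le_dim]
      \<open>c < 1\<close>, of "\<lambda>s. blk_vec l z p $ s"])
  show "finite {..<l p}"
    by simp
  show "\<forall>s\<in>{..<l p}. 0 \<le> blk_vec l z p $ s"
    using assms blk_end_le_dim by (simp add: blk_vec_nth)
  show "\<forall>s\<in>{..<l p}. blk_solve l Q p z $ s
      = blk_vec l z p $ s + (\<Sum>t\<in>{..<l p}. blk_mat l Q p p $$ (s, t) * blk_solve l Q p z $ t)"
    by (intro ballI blk_solve_fixed_point) simp
qed

lemma blk_embed_solve_nonneg:
  assumes "\<forall>i<n. 0 \<le> z $ i"
  shows "0 \<le> blk_embed l p (blk_solve l Q p z) j"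
  using blk_solve_nonneg[OF assms] by (auto simp: blk_embed_def)

lemma blk_update_nth:
  assumes "r < l h"
  shows "blk_update l Q h p z $ r
    = (\<Sum>j<n. Q $$ (blk_off l h + r, j) * blk_embed l p (blk_solve l Q p z) j)"
proof -
  have "blk_update l Q h p z $ r = (\<Sum>t\<in>{0..<l p}. blk_mat l Q h p $$ (r, t) * blk_solve l Q p z $ t)"
    using assms by (simp add: blk_update_eq scalar_prod_def blk_mat_def)
  also have "\<dots> = (\<Sum>t<l p. Q $$ (blk_off l h + r, blk_off l p + t) * blk_solve l Q p z $ t)"
    using assms by (simp add: lessThan_atLeast0 blk_mat_nth)
  also have "\<dots> = (\<Sum>j<n. Q $$ (blk_off l h + r, j) * blk_embed l p (blk_solve l Q p z) j)"
    using blk_end_le_dim by (rule sum_mult_blk_embed[symmetric])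
  finally show ?thesis .
qed

lemma blk_index_cases:
  assumes "i < n"
  obtains h r where "h < N" "r < l h" "i = blk_off l h + r" "v $ i = blk_vec l v h $ r"
  using blk_index_exists[of i l N] assms partition by (auto simp: blk_vec_nth)

lemma blk_step_x:
  assumes x': "\<forall>h<N. blk_vec l x' h = blk_vec l x h + blk_update l Q h p z" and i: "i < n"
  shows "x' $ i = x $ i + (\<Sum>j<n. Q $$ (i, j) * blk_embed l p (blk_solve l Q p z) j)"
proof -
  obtain h r where h: "h < N" "r < l h" "i = blk_off l h + r"
    using blk_index_cases[OF i] by blast
  have "blk_vec l x' h $ r = blk_vec l x h $ r + blk_update l Q h p z $ r"
    using x' h by simp
  then show ?thesis
    using h by (simp add: blk_vec_nth blk_update_nth)
qed

lemma blk_step_z: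
  assumes z': "\<forall>h<N. blk_vec l z' h =
      (if h = p then 0\<^sub>v (l h) else blk_vec l z h + blk_update l Q h p z)" and i: "i < n"
  shows "z' $ i = z $ i + (\<Sum>j<n. Q $$ (i, j) * blk_embed l p (blk_solve l Q p z) j)
      - blk_embed l p (blk_solve l Q p z) i"
proof -
  obtain h r where h: "h < N" "r < l h" "i = blk_off l h + r"
    using blk_index_cases[OF i] by blast
  show ?thesis
  proof (cases "h = p")
    case True
    have "z' $ i = 0"
      using z' h True by (metis blk_vec_nth index_zero_vec(1))
    moreover have "blk_embed l p (blk_solve l Q p z) i
        = z $ i + (\<Sum>j<n. Q $$ (i, j) * blk_embed l p (blk_solve l Q p z) j)"
      using h True blk_solve_fixed_point[of r z] blk_end_le_dim
      by (simp add: blk_embed_nth sum_mult_blk_embed blk_vec_nth blk_mat_nth)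
    ultimately show ?thesis
      by simp
  next
    case False
    have "blk_vec l z' h $ r = blk_vec l z h $ r + blk_update l Q h p z $ r"
      using z' h False by simp
    then show ?thesis
      using h False by (simp add: blk_vec_nth blk_update_nth blk_embed_nth)
  qed
qed

lemma blk_step_x_mono:
  assumes x': "\<forall>h<N. blk_vec l x' h = blk_vec l x h + blk_update l Q h p z"
    and z: "\<forall>i<n. 0 \<le> z $ i" and i: "i < n"
  shows "x $ i \<le> x' $ i"
proof -
  have "0 \<le> (\<Sum>j<n. Q $$ (i, j) * blk_embed l p (blk_solve l Q p z) j)"
    using Q blk_embed_solve_nonneg[OF z] i by (auto simp: col_substochastic_def intro!: sum_nonneg)
  then show ?thesis
    using blk_step_x[OF x' i] by linarith
qed

lemma blk_step_z_nonneg: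
  assumes z': "\<forall>h<N. blk_vec l z' h =
      (if h = p then 0\<^sub>v (l h) else blk_vec l z h + blk_update l Q h p z)"
    and z: "\<forall>i<n. 0 \<le> z $ i" and i: "i < n"
  shows "0 \<le> z' $ i"
proof -
  obtain h r where h: "h < N" "r < l h" "i = blk_off l h + r" "z' $ i = blk_vec l z' h $ r"
    using blk_index_cases[OF i] by blast
  have "0 \<le> blk_update l Q h p z $ r"
    using Q z blk_embed_solve_nonneg[OF z] h i
    by (auto simp: blk_update_nth col_substochastic_def intro!: sum_nonneg mult_nonneg_nonneg)
  then show ?thesis
    using z' z h i by (cases "h = p") (simp_all add: blk_vec_nth)
qed

end

lemma blk_iteration_residual_nonneg:
  assumes Q: "col_substochastic {..<n} (\<lambda>i j. Q $$ (i, j)) c" and "c < 1"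
    and partition: "blk_off l N = n" and psi: "\<forall>k. psi k < N" and z0: "\<forall>i<n. 0 \<le> z 0 $ i"
    and z_step: "\<forall>k. \<forall>h<N. blk_vec l (z (Suc k)) h =
      (if h = psi k then 0\<^sub>v (l h) else blk_vec l (z k) h + blk_update l Q h (psi k) (z k))"
  shows "\<forall>i<n. 0 \<le> z k $ i"
proof (induction k)
  case 0
  then show ?case
    using z0 .
next
  case (Suc k)
  then show ?case
    using blk_step_z_nonneg[OF Q \<open>c < 1\<close> partition psi[rule_format] z_step[THEN spec] Suc.IH] by blast
qed

lemma hyperlink_matrix_col_sum:
  assumes E: "E \<subseteq> {0..<n} \<times> {0..<n}" and ne: "out_links E j \<noteq> {}" and j: "j < n"
  shows "(\<Sum>i<n. hyperlink_matrix n E $$ (i, j)) = 1"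
proof -
  let ?O = "out_links E j"
  have sub: "?O \<subseteq> {..<n}"
    using E by (auto simp: out_links_def)
  then have "finite ?O"
    by (rule finite_subset) simp
  have "(\<Sum>i<n. hyperlink_matrix n E $$ (i, j)) = (\<Sum>i<n. if i \<in> ?O then 1 / real (card ?O) else 0)"
    using j by (simp add: hyperlink_matrix_def)
  also have "\<dots> = (\<Sum>i\<in>?O. 1 / real (card ?O))"
    using sub by (simp add: sum.If_cases Int_absorb1)
  also have "\<dots> = 1"
    using \<open>finite ?O\<close> ne by simp
  finally show ?thesis .
qed

lemma col_substochastic_damped_hyperlink_matrix:
  assumes E: "E \<subseteq> {0..<n} \<times> {0..<n}" and ne: "\<forall>j<n. out_links E j \<noteq> {}" and "m \<le> 1"
  shows "col_substochastic {..<n} (\<lambda>i j. ((1 - m) \<cdot>\<^sub>m hyperlink_matrix n E) $$ (i, j)) (1 - m)"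
  using assms hyperlink_matrix_col_sum[OF E]
  by (auto simp: col_substochastic_def hyperlink_matrix_def simp flip: sum_distrib_left)

lemma pagerank_initial_gap:
  assumes pr: "is_pagerank n A m xs" and A: "A \<in> carrier_mat n n"
    and x0: "x0 = vec n (\<lambda>_. m / real n)" and z0: "z0 = vec n (\<lambda>_. m / real n)"
  shows "\<forall>i\<in>{..<n}. xs $ i - x0 $ i = (\<Sum>j\<in>{..<n}. ((1 - m) \<cdot>\<^sub>m A) $$ (i, j) * (xs $ j - x0 $ j + z0 $ j))"
proof
  fix i assume i: "i \<in> {..<n}"
  have xs: "xs \<in> carrier_vec n" and eq: "xs = (1 - m) \<cdot>\<^sub>m A *\<^sub>v xs + (m / real n) \<cdot>\<^sub>v vec n (\<lambda>_. 1)"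
    using pr by (simp_all add: is_pagerank_def)
  from eq have "xs $ i = ((1 - m) \<cdot>\<^sub>m A *\<^sub>v xs + (m / real n) \<cdot>\<^sub>v vec n (\<lambda>_. 1)) $ i"
    by (rule arg_cong)
  also have "\<dots> = (\<Sum>j<n. ((1 - m) \<cdot>\<^sub>m A) $$ (i, j) * xs $ j) + m / real n"
    using xs A i by (simp add: scalar_prod_def lessThan_atLeast0)
  finally show "xs $ i - x0 $ i = (\<Sum>j\<in>{..<n}. ((1 - m) \<cdot>\<^sub>m A) $$ (i, j) * (xs $ j - x0 $ j + z0 $ j))"
    using i x0 z0 by simp
qed

theorem lemma4:
  fixes n N :: nat and E :: "(nat \<times> nat) set" and m :: real
    and xs :: "real vec" and l :: "nat \<Rightarrow> nat" and psi :: "nat \<Rightarrow> nat"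
    and x z :: "nat \<Rightarrow> real vec"
  assumes n2: "n \<ge> 2"
    and E_nodes: "E \<subseteq> {0..<n} \<times> {0..<n}"
    and out_nonempty: "\<forall>j<n. out_links E j \<noteq> {}"
    and m: "0 < m" "m < 1"
    and pr: "is_pagerank n (hyperlink_matrix n E) m xs"
    and N: "1 \<le> N" "N \<le> n"
    and l_pos: "\<forall>h<N. 1 \<le> l h"
    and l_sum: "(\<Sum>h<N. l h) = n"
    and psi: "\<forall>k. psi k < N"
    and dims: "\<forall>k. x k \<in> carrier_vec n \<and> z k \<in> carrier_vec n"
    and init: "x 0 = vec n (\<lambda>_. m / real n)" "z 0 = vec n (\<lambda>_. m / real n)"
    and x_step: "\<forall>k. \<forall>h<N. blk_vec l (x (Suc k)) h =
        blk_vec l (x k) h + blk_update l ((1 - m) \<cdot>\<^sub>m hyperlink_matrix n E) h (psi k) (z k)"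
    and z_step: "\<forall>k. \<forall>h<N. blk_vec l (z (Suc k)) h =
        (if h = psi k then 0\<^sub>v (l h)
         else blk_vec l (z k) h + blk_update l ((1 - m) \<cdot>\<^sub>m hyperlink_matrix n E) h (psi k) (z k))"
  shows "\<forall>k. \<forall>i<n. x k $ i \<le> x (Suc k) $ i \<and> x (Suc k) $ i \<le> xs $ i"
proof -
  define Q where "Q = (1 - m) \<cdot>\<^sub>m hyperlink_matrix n E"
  define Y where "Y k = blk_embed l (psi k) (blk_solve l Q (psi k) (z k))" for k
  have Q: "col_substochastic {..<n} (\<lambda>i j. Q $$ (i, j)) (1 - m)"
    unfolding Q_def using col_substochastic_damped_hyperlink_matrix E_nodes out_nonempty m by simp
  have c: "1 - m < 1" and partition: "blk_off l N = n"
    using m l_sum by (simp_all add: blk_off_def)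
  note step = Q c partition psi[rule_format]
  note x_blk = x_step[THEN spec, folded Q_def] and z_blk = z_step[THEN spec, folded Q_def]
  have x_glob: "\<forall>k. \<forall>i\<in>{..<n}. x (Suc k) $ i = x k $ i + (\<Sum>j\<in>{..<n}. Q $$ (i, j) * Y k j)"
    using blk_step_x[OF step x_blk] by (simp add: Y_def)
  have z_glob: "\<forall>k. \<forall>i\<in>{..<n}. z (Suc k) $ i = z k $ i + (\<Sum>j\<in>{..<n}. Q $$ (i, j) * Y k j) - Y k i"
    using blk_step_z[OF step z_blk] by (simp add: Y_def)
  have z_nonneg: "\<forall>i<n. 0 \<le> z k $ i" for k
    by (rule blk_iteration_residual_nonneg[OF Q c partition psi _ z_step[folded Q_def]]) (use init m in simp)
  have gap_0: "\<forall>i\<in>{..<n}. xs $ i - x 0 $ i = (\<Sum>j\<in>{..<n}. Q $$ (i, j) * (xs $ j - x 0 $ j + z 0 $ j))"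
    unfolding Q_def by (rule pagerank_initial_gap[OF pr _ init]) (simp add: hyperlink_matrix_def)
  have gap: "\<forall>i\<in>{..<n}. xs $ i - x k $ i = (\<Sum>j\<in>{..<n}. Q $$ (i, j) * (xs $ j - x k $ j + z k $ j))" for k
    by (rule iteration_gap_invariant[where x = "\<lambda>k i. x k $ i" and z = "\<lambda>k i. z k $ i", OF gap_0 x_glob z_glob])
  show ?thesis
  proof (intro allI impI conjI)
    fix k i assume i: "i < n"
    show "x k $ i \<le> x (Suc k) $ i"
      by (rule blk_step_x_mono[OF step x_blk z_nonneg i])
    show "x (Suc k) $ i \<le> xs $ i"
      using le_of_gap_invariant[where x = "\<lambda>i. x (Suc k) $ i" and z = "\<lambda>i. z (Suc k) $ i"
          and xs = "\<lambda>i. xs $ i" and q = "\<lambda>i j. Q $$ (i, j)", OF _ Q c _ gap] z_nonneg i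
      by simp
  qed
qed

end
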